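(* Let $N\ge 2$ and let $T_1,\dots,T_N>0$ be independent, identically distributed random variables on a probability space $(\Omega,\mathcal F,\mathbb P)$ with a continuous distribution function, with order statistics $T_{(1)}\le\cdots\le T_{(N)}$. Let $U_1,\dots,U_N$ be independent standard uniform random variables with order statistics $U_{(1)}\le\cdots\le U_{(N)}$. Let $C(s)$, $s=0,1,2,\dots$, be the income process of the pooled annuity fund described in the context. Fix constants $\varepsilon_1\in(0,1)$, $\varepsilon_2>0$ and $k\in\{1,2,\dots,N\}$. Then \[ \begin{split} &\mathbb{P}\left[(1+\varepsilon_2)C(0)\ge C(s)\ge(1-\varepsilon_1)C(0)\ \text{for all } s\in\{1,2,\dots,\lfloor T_{(k)}\rfloor\}\right]\\ \ge\ &\mathbb{P}\left[(1-\varepsilon_1)\tfrac{i-1}{N}+\varepsilon_1\ \ge\ U_{(i)}\ \ge\ (1+\varepsilon_2)\tfrac{\min\{i,N-1\}}{N}-\varepsilon_2\ \text{for all } i\in\{1,2,\dots,k\}\right], \end{split} \] where $\lfloor T_{(k)}\rfloor$ denotes the integer part of $T_{(k)}$.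
   Context: Pooled annuity fund: $N\ge2$ members, all aged $x\ge0$ at time $0$; member $i$ has future lifetime $T_i$ (from age $x$), the $T_i$ being i.i.d. with a continuous distribution. The number alive at age $x+t$ is $L_{x+t}=\sum_{i=1}^N \mathbf 1_{[T_i>t]}$ for $t\ge0$. The (true) survival probability is ${}_sp_{x+t}=\mathbb P[T_i>t+s\mid T_i>t]$, with $p_{x+t}:={}_1p_{x+t}$. A constant effective rate of return $R>-1$ per unit time is earned. The annuity factor is $\ddot a_{x+t}=1+\sum_{j=1}^\infty(1+R)^{-j}\,{}_jp_{x+t}$. Each member has account value $W(t)\ge0$, with constant $W(0)>0$, and withdraws income $C(t)=W(t)/\ddot a_{x+t}$ at $t=0,1,2,\dots$. The longevity credit paid at time $t+1$ to each member alive at $t+1$ is $M(t+1)=(W(t)-C(t))(1+R)(L_{x+t}-L_{x+t+1})/L_{x+t+1}$ if $L_{x+t+1}>0$, and the account value of a surviving member at time $t+1$ is $W(t+1)=(W(t)-C(t))(1+R)+M(t+1)$ (all members are identical, so $W(t)$ and $C(t)$ are common to all survivors; the fund ceases if nobody is alive). *)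

theory Defs
  imports "HOL-Probability.Probability"
begin

text \<open>k-th order statistic (1-indexed, k in 1..N) of the values x 0, ..., x (N-1).\<close>
definition order_stat :: "nat \<Rightarrow> (nat \<Rightarrow> real) \<Rightarrow> nat \<Rightarrow> real" where
  "order_stat N x k = sort (map x [0..<N]) ! (k - 1)"

text \<open>Pooled annuity fund. S t = P[T_i > t] is the (unconditional) survival function
  of the future lifetime from age x; L t is the number of members alive at age x+t.\<close>

definition surv_prob :: "(real \<Rightarrow> real) \<Rightarrow> real \<Rightarrow> real \<Rightarrow> real" where
  "surv_prob S t s = S (t + s) / S t"

definition annuity_factor :: "real \<Rightarrow> (real \<Rightarrow> real) \<Rightarrow> real \<Rightarrow> real" where
  "annuity_factor R S t = 1 + (\<Sum>j. inverse ((1 + R) ^ Suc j) * surv_prob S t (real (Suc j)))"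

fun fund_W :: "real \<Rightarrow> (real \<Rightarrow> real) \<Rightarrow> (nat \<Rightarrow> nat) \<Rightarrow> real \<Rightarrow> nat \<Rightarrow> real" where
  "fund_W R S L W0 0 = W0"
| "fund_W R S L W0 (Suc t) =
     (let w = fund_W R S L W0 t;
          c = w / annuity_factor R S (real t);
          m = (w - c) * (1 + R) * (real (L t) - real (L (Suc t))) / real (L (Suc t))
      in if L (Suc t) > 0 then (w - c) * (1 + R) + m else 0)"

definition fund_C :: "real \<Rightarrow> (real \<Rightarrow> real) \<Rightarrow> (nat \<Rightarrow> nat) \<Rightarrow> real \<Rightarrow> nat \<Rightarrow> real" where
  "fund_C R S L W0 t = fund_W R S L W0 t / annuity_factor R S (real t)"

end

theory Submission
  imports Defs
begin

text \<open>
  Let \<open>F\<close> be the continuous distribution function of the lifetimes. The \<open>F(T\<^sub>i)\<close> are i.i.d.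
  standard uniform, so the band event for the \<open>U\<^sub>i\<close> has the same probability as the band event
  for the \<open>F(T\<^sub>i)\<close>, and it suffices to show that the latter implies the income bounds (up to the
  null event of a lifetime hitting an integer). Fix an integer time \<open>s\<close> below the \<open>k\<close>-th smallest
  lifetime and let \<open>m < k\<close> be the number of deaths by time \<open>s\<close>. The band at the order statistics
  \<open>m + 1\<close> and \<open>m\<close> pins \<open>F(s)\<close> between \<open>(1 + \<epsilon>\<^sub>2) m / N - \<epsilon>\<^sub>2\<close> and \<open>(1 - \<epsilon>\<^sub>1) m / N + \<epsilon>\<^sub>1\<close>.
  On the other hand the recursion of the fund telescopes to \<open>C(s) L(s) = C(0) N S(s)\<close> with
  \<open>S = 1 - F\<close> and \<open>L(s) = N - m\<close>, and the two bounds on \<open>F(s)\<close> are exactly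
  \<open>(1 - \<epsilon>\<^sub>1) C(0) \<le> C(s) \<le> (1 + \<epsilon>\<^sub>2) C(0)\<close>.
\<close>

subsection \<open>Order statistics\<close>

lemma sorted_nth_downclosed_iff:
  fixes ys :: "'a::linorder list"
  assumes "sorted ys" "i < length ys" and down: "\<And>y y'. P y \<Longrightarrow> y' \<le> y \<Longrightarrow> P y'"
  shows "P (ys ! i) \<longleftrightarrow> i < length (filter P ys)"
proof -
  have len: "length (filter P ys) = card {j. j < length ys \<and> P (ys ! j)}"
    by (rule length_filter_conv_card)
  show ?thesis
  proof
    assume "P (ys ! i)"
    then have "{..i} \<subseteq> {j. j < length ys \<and> P (ys ! j)}"
      using assms by (auto intro: down simp: sorted_iff_nth_mono)
    from card_mono[OF _ this] show "i < length (filter P ys)" by (simp add: len)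
  next
    assume i: "i < length (filter P ys)"
    show "P (ys ! i)"
    proof (rule ccontr)
      assume not_P: "\<not> P (ys ! i)"
      have "{j. j < length ys \<and> P (ys ! j)} \<subseteq> {..<i}"
      proof (intro subsetI, rule ccontr)
        fix j assume j: "j \<in> {j. j < length ys \<and> P (ys ! j)}" "j \<notin> {..<i}"
        then have "ys ! i \<le> ys ! j"
          using assms(1,2) by (auto simp: sorted_iff_nth_mono)
        then show False
          using down[of "ys ! j" "ys ! i"] j not_P by simp
      qed
      from card_mono[OF _ this] i show False
        by (simp add: len)
    qed
  qed
qed

lemma order_stat_downclosed_iff:
  assumes "1 \<le> i" "i \<le> N" and "\<And>y y'. P y \<Longrightarrow> y' \<le> y \<Longrightarrow> P y'"
  shows "P (order_stat N x i) \<longleftrightarrow> i \<le> card {j. j < N \<and> P (x j)}"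
proof -
  have "length (filter P (sort (map x [0..<N]))) = length (filter P (map x [0..<N]))"
    by (metis mset_filter mset_sort size_mset)
  also have "\<dots> = card {j. j < N \<and> P (x j)}"
    by (subst length_filter_conv_card) (auto intro!: arg_cong[where f = card])
  finally show ?thesis
    using assms unfolding order_stat_def
    by (subst sorted_nth_downclosed_iff[where P = P]) auto
qed

lemma order_stat_le_iff:
  "1 \<le> i \<Longrightarrow> i \<le> N \<Longrightarrow> order_stat N x i \<le> a \<longleftrightarrow> i \<le> card {j. j < N \<and> x j \<le> a}"
  by (rule order_stat_downclosed_iff) auto

lemma order_stat_less_iff:
  "1 \<le> i \<Longrightarrow> i \<le> N \<Longrightarrow> order_stat N x i < a \<longleftrightarrow> i \<le> card {j. j < N \<and> x j < a}"
  by (rule order_stat_downclosed_iff) auto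

lemma order_stat_cong: "(\<And>j. j < N \<Longrightarrow> x j = y j) \<Longrightarrow> order_stat N x i = order_stat N y i"
  unfolding order_stat_def by (metis (mono_tags, lifting) atLeastLessThan_iff map_eq_conv set_upt)

lemma borel_measurable_order_stat:
  assumes "1 \<le> k" "k \<le> N" and [measurable]: "\<And>i. i < N \<Longrightarrow> X i \<in> borel_measurable M"
  shows "(\<lambda>\<omega>. order_stat N (\<lambda>i. X i \<omega>) k) \<in> borel_measurable M"
proof (rule borel_measurable_iff_le[THEN iffD2], intro allI)
  fix a
  have "{\<omega> \<in> space M. order_stat N (\<lambda>i. X i \<omega>) k \<le> a} =
      {\<omega> \<in> space M. k \<le> card {j. j < N \<and> X j \<omega> \<le> a}}"
    by (simp add: order_stat_le_iff[OF assms(1,2)])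
  also have "\<dots> \<in> sets M"
    by measurable
  finally show "{\<omega> \<in> space M. order_stat N (\<lambda>i. X i \<omega>) k \<le> a} \<in> sets M" .
qed

definition order_stat_band :: "nat \<Rightarrow> nat \<Rightarrow> real \<Rightarrow> real \<Rightarrow> (nat \<Rightarrow> real) \<Rightarrow> bool" where
  "order_stat_band N k \<epsilon>1 \<epsilon>2 x \<longleftrightarrow> (\<forall>i\<in>{1..k}.
     (1 - \<epsilon>1) * (real i - 1) / real N + \<epsilon>1 \<ge> order_stat N x i \<and>
     order_stat N x i \<ge> (1 + \<epsilon>2) * real (min i (N - 1)) / real N - \<epsilon>2)"

lemma order_stat_band_cong:
  assumes "\<And>j. j < N \<Longrightarrow> x j = y j"
  shows "order_stat_band N k \<epsilon>1 \<epsilon>2 x = order_stat_band N k \<epsilon>1 \<epsilon>2 y"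
  by (simp only: order_stat_band_def order_stat_cong[of N x y, OF assms])

lemma order_stat_band_restrict [simp]:
  "order_stat_band N k \<epsilon>1 \<epsilon>2 (restrict x {0..<N}) = order_stat_band N k \<epsilon>1 \<epsilon>2 x"
  by (rule order_stat_band_cong) simp

lemma sets_order_stat_band:
  assumes "k \<le> N"
  shows "{x \<in> space (\<Pi>\<^sub>M i\<in>{0..<N}. borel). order_stat_band N k \<epsilon>1 \<epsilon>2 x}
    \<in> sets (\<Pi>\<^sub>M i\<in>{0..<N}. borel)"
proof -
  have [measurable]: "(\<lambda>x. order_stat N (\<lambda>j. x j) i) \<in> borel_measurable (\<Pi>\<^sub>M i\<in>{0..<N}. borel)"
    if "i \<in> {1..k}" for i
    using that assms by (intro borel_measurable_order_stat) auto
  show ?thesis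
    unfolding order_stat_band_def by measurable
qed

lemma survivors_within_band:
  fixes F :: "real \<Rightarrow> real" and T :: "nat \<Rightarrow> real"
  assumes F_mono: "mono F" and F_nonneg: "\<And>u. 0 \<le> F u"
    and band: "order_stat_band N k \<epsilon>1 \<epsilon>2 (\<lambda>j. F (T j))"
    and k: "1 \<le> k" "k \<le> N" and \<epsilon>2: "0 \<le> \<epsilon>2"
    and no_tie: "\<And>j. j < N \<Longrightarrow> T j \<noteq> s" and s: "s \<le> order_stat N T k"
  defines "l \<equiv> card {j. j < N \<and> s < T j}"
  shows "0 < l \<and> (1 - \<epsilon>1) * real l \<le> real N * (1 - F s) \<and> real N * (1 - F s) \<le> (1 + \<epsilon>2) * real l"
proof -
  define m where "m = card {j. j < N \<and> T j \<le> s}"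
  have "{j. j < N \<and> T j \<le> s} = {j. j < N \<and> T j < s}"
    using no_tie by force
  then have m: "m < k"
    using s order_stat_less_iff[OF k, of T s] unfolding m_def by simp
  have "{j. j < N \<and> s < T j} = {..<N} - {j. j < N \<and> T j \<le> s}"
    by auto
  then have l: "real l = real N - real m" and "0 < l"
    using m k unfolding l_def m_def by (auto simp: card_Diff_subset subset_eq)
  have N: "0 < real N"
    using k by simp
  have upper: "F s \<le> (1 - \<epsilon>1) * real m / real N + \<epsilon>1"
  proof (rule ccontr)
    let ?A = "(1 - \<epsilon>1) * real m / real N + \<epsilon>1"
    assume "\<not> F s \<le> ?A"
    then have "T j \<le> s" if "F (T j) \<le> ?A" for j
      using that monoD[OF F_mono, of s "T j"] by linarith
    then have "{j. j < N \<and> F (T j) \<le> ?A} \<subseteq> {j. j < N \<and> T j \<le> s}"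
      by auto
    then have "card {j. j < N \<and> F (T j) \<le> ?A} \<le> m"
      unfolding m_def by (rule card_mono[rotated]) simp
    moreover have "order_stat N (\<lambda>j. F (T j)) (m + 1) \<le> ?A"
      using band m unfolding order_stat_band_def by (auto dest: bspec[of _ _ "m + 1"])
    then have "m + 1 \<le> card {j. j < N \<and> F (T j) \<le> ?A}"
      using m k by (subst (asm) order_stat_le_iff) auto
    ultimately show False
      by simp
  qed
  have lower: "(1 + \<epsilon>2) * real m / real N - \<epsilon>2 \<le> F s"
  proof (cases "m = 0")
    case True
    then show ?thesis using F_nonneg[of s] \<epsilon>2 by simp
  next
    case False
    show ?thesis
    proof (rule ccontr)
      let ?B = "(1 + \<epsilon>2) * real m / real N - \<epsilon>2"
      assume "\<not> ?B \<le> F s"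
      then have "F (T j) < ?B" if "T j \<le> s" for j
        using that monoD[OF F_mono, of "T j" s] by linarith
      then have "{j. j < N \<and> T j \<le> s} \<subseteq> {j. j < N \<and> F (T j) < ?B}"
        by auto
      then have "m \<le> card {j. j < N \<and> F (T j) < ?B}"
        unfolding m_def by (rule card_mono[rotated]) simp
      moreover have "\<not> order_stat N (\<lambda>j. F (T j)) m < ?B"
        using band m k False unfolding order_stat_band_def by (auto dest: bspec[of _ _ m])
      then have "\<not> m \<le> card {j. j < N \<and> F (T j) < ?B}"
        using m k False by (subst (asm) order_stat_less_iff) auto
      ultimately show False
        by simp
    qed
  qed
  have "real N * F s \<le> (1 - \<epsilon>1) * real m + \<epsilon>1 * real N"
    using upper N by (simp add: field_simps)
  moreover have "(1 + \<epsilon>2) * real m - \<epsilon>2 * real N \<le> real N * F s"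
    using lower N by (simp add: field_simps)
  ultimately show ?thesis
    using \<open>0 < l\<close> unfolding l by (simp add: algebra_simps)
qed

subsection \<open>Annuity factor and income\<close>

definition income_within_band ::
    "nat \<Rightarrow> nat \<Rightarrow> real \<Rightarrow> real \<Rightarrow> real \<Rightarrow> (real \<Rightarrow> real) \<Rightarrow> real \<Rightarrow> (nat \<Rightarrow> real) \<Rightarrow> bool" where
  "income_within_band N k \<epsilon>1 \<epsilon>2 R S W0 T \<longleftrightarrow>
     (\<forall>s::nat. 1 \<le> s \<and> int s \<le> \<lfloor>order_stat N T k\<rfloor> \<longrightarrow>
        (let L = (\<lambda>t::nat. card {i. i < N \<and> T i > real t});
             C = fund_C R S L W0
         in (1 + \<epsilon>2) * C 0 \<ge> C s \<and> C s \<ge> (1 - \<epsilon>1) * C 0))"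

locale life_annuity =
  fixes R :: real and S :: "real \<Rightarrow> real"
  assumes R_gt: "R > -1"
    and annuity_summable: "\<And>t::nat. summable (\<lambda>j. inverse ((1 + R) ^ Suc j) * surv_prob S (real t) (real (Suc j)))"
    and antimono: "\<And>x y. x \<le> y \<Longrightarrow> S y \<le> S x"
    and nonneg: "\<And>x. 0 \<le> S x"
begin

lemma surv_prob_add:
  assumes "0 \<le> a" "0 \<le> b"
  shows "surv_prob S t (a + b) = surv_prob S t a * surv_prob S (t + a) b"
proof (cases "S (t + a) = 0")
  case True
  then have "S (t + (a + b)) = 0"
    using antimono[of "t + a" "t + (a + b)"] nonneg[of "t + (a + b)"] assms by simp
  then show ?thesis using True by (simp add: surv_prob_def)
next
  case False
  then show ?thesis by (simp add: surv_prob_def add.assoc)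
qed

lemma annuity_factor_ge_1: "1 \<le> annuity_factor R S (real t)"
proof -
  have "0 \<le> inverse ((1 + R) ^ Suc j) * surv_prob S (real t) (real (Suc j))" for j
    using R_gt nonneg by (simp add: surv_prob_def)
  then show ?thesis
    unfolding annuity_factor_def using suminf_nonneg[OF annuity_summable] by simp
qed

lemma annuity_factor_Suc:
  "(annuity_factor R S (real t) - 1) * (1 + R) =
     surv_prob S (real t) 1 * annuity_factor R S (real (Suc t))"
proof -
  define v where "v t j = inverse ((1 + R) ^ Suc j) * surv_prob S (real t) (real (Suc j))" for t j
  have R': "1 + R \<noteq> 0"
    using R_gt by simp
  have "v t (Suc j) = inverse (1 + R) * surv_prob S (real t) 1 * v (Suc t) j" for j
    using surv_prob_add[of 1 "real (Suc j)" "real t"]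
    by (simp add: v_def add.commute field_simps)
  then have "(\<Sum>j. v t (Suc j)) = inverse (1 + R) * surv_prob S (real t) 1 * (\<Sum>j. v (Suc t) j)"
    using suminf_mult[OF annuity_summable[of "Suc t", folded v_def]] by simp
  moreover have "(\<Sum>j. v t j) = v t 0 + (\<Sum>j. v t (Suc j))"
    using suminf_split_head[OF annuity_summable[of t, folded v_def]] by simp
  moreover have "v t 0 = inverse (1 + R) * surv_prob S (real t) 1"
    by (simp add: v_def)
  ultimately show ?thesis
    using R' unfolding annuity_factor_def v_def[symmetric] by (simp add: field_simps)
qed

lemma fund_C_Suc:
  assumes "0 < L (Suc t)"
  shows "fund_C R S L W0 (Suc t) =
    fund_C R S L W0 t * surv_prob S (real t) 1 * real (L t) / real (L (Suc t))"
proof -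
  define w where "w = fund_W R S L W0 t"
  define a where "a = annuity_factor R S (real t)"
  define a' where "a' = annuity_factor R S (real (Suc t))"
  have a: "1 \<le> a" "1 \<le> a'"
    unfolding a_def a'_def by (rule annuity_factor_ge_1)+
  define x where "x = (w - w / a) * (1 + R)"
  have "fund_W R S L W0 (Suc t) = x + x * (real (L t) - real (L (Suc t))) / real (L (Suc t))"
    using assms by (simp add: x_def w_def a_def Let_def)
  also have "\<dots> = x * real (L t) / real (L (Suc t))"
    using assms by (simp add: field_simps)
  also have "\<dots> = w / a * ((a - 1) * (1 + R)) * real (L t) / real (L (Suc t))"
    unfolding x_def using a by (simp add: field_simps)
  also have "\<dots> = w / a * surv_prob S (real t) 1 * a' * real (L t) / real (L (Suc t))"
    unfolding a_def a'_def annuity_factor_Suc by simp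
  finally show ?thesis
    using a unfolding fund_C_def w_def a_def a'_def by simp
qed

lemma fund_C_mult_survivors:
  assumes L_anti: "\<And>t. L (Suc t) \<le> L t" and S0: "S 0 = 1" and "0 < L s"
  shows "fund_C R S L W0 s * real (L s) = fund_C R S L W0 0 * real (L 0) * S (real s)"
  using \<open>0 < L s\<close>
proof (induction s)
  case 0
  then show ?case using S0 by simp
next
  case (Suc t)
  have IH: "fund_C R S L W0 t * real (L t) = fund_C R S L W0 0 * real (L 0) * S (real t)"
    using Suc L_anti[of t] by simp
  show ?case
  proof (cases "S (real t) = 0")
    case True
    then have "S (real (Suc t)) = 0"
      using antimono[of "real t" "real (Suc t)"] nonneg[of "real (Suc t)"] by simp
    then show ?thesis
      using Suc.prems True by (simp add: fund_C_Suc surv_prob_def)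
  next
    case False
    then show ?thesis
      using Suc.prems IH by (simp add: fund_C_Suc surv_prob_def add.commute field_simps)
  qed
qed

lemma income_within_band_if_order_stat_band:
  fixes T :: "nat \<Rightarrow> real" and F :: "real \<Rightarrow> real"
  assumes S_F: "\<And>u. S u = 1 - F u" and S0: "S 0 = 1" and F_nonneg: "\<And>u. 0 \<le> F u"
    and T_pos: "\<And>j. j < N \<Longrightarrow> 0 < T j" and no_tie: "\<forall>s::nat. \<forall>j<N. T j \<noteq> real s"
    and k: "1 \<le> k" "k \<le> N" and \<epsilon>2: "0 \<le> \<epsilon>2" and W0: "0 < W0"
    and band: "order_stat_band N k \<epsilon>1 \<epsilon>2 (\<lambda>j. F (T j))"
  shows "income_within_band N k \<epsilon>1 \<epsilon>2 R S W0 T"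
proof -
  define L where "L t = card {i. i < N \<and> real t < T i}" for t :: nat
  define C where "C = fund_C R S L W0"
  have "mono F"
    using antimono S_F by (auto simp: mono_def)
  have L_anti: "L (Suc t) \<le> L t" for t
    unfolding L_def by (rule card_mono) auto
  have "{i. i < N \<and> real 0 < T i} = {..<N}"
    using T_pos by auto
  then have L0: "L 0 = N"
    unfolding L_def by simp
  have C0: "0 < C 0"
    unfolding C_def fund_C_def using W0 annuity_factor_ge_1[of 0] by simp
  have "(1 + \<epsilon>2) * C 0 \<ge> C s \<and> C s \<ge> (1 - \<epsilon>1) * C 0" if s: "real s \<le> order_stat N T k" for s
  proof -
    from survivors_within_band[OF \<open>mono F\<close> F_nonneg band k \<epsilon>2 _ s] no_tie
    have L: "0 < L s" and lower: "(1 - \<epsilon>1) * real (L s) \<le> real N * (1 - F (real s))"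
      and upper: "real N * (1 - F (real s)) \<le> (1 + \<epsilon>2) * real (L s)"
      unfolding L_def by auto
    have C_s: "C s * real (L s) = C 0 * (real N * (1 - F (real s)))"
      using fund_C_mult_survivors[OF L_anti S0 L] L0 unfolding C_def S_F by simp
    have "C s * real (L s) \<le> ((1 + \<epsilon>2) * C 0) * real (L s)"
      and "((1 - \<epsilon>1) * C 0) * real (L s) \<le> C s * real (L s)"
      using mult_left_mono[OF upper, of "C 0"] mult_left_mono[OF lower, of "C 0"] C0
      unfolding C_s by (simp_all add: ac_simps)
    with L show ?thesis
      by simp
  qed
  then show ?thesis
    unfolding income_within_band_def Let_def le_floor_iff of_int_of_nat_eq
    by (simp add: C_def L_def[abs_def])
qed

end

lemma measurable_fund_C:
  assumes [measurable]: "\<And>t. (\<lambda>\<omega>. L \<omega> t) \<in> measurable M (count_space UNIV)"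
  shows "(\<lambda>\<omega>. fund_C R S (L \<omega>) W0 s) \<in> borel_measurable M"
proof -
  have "(\<lambda>\<omega>. fund_W R S (L \<omega>) W0 t) \<in> borel_measurable M" for t
  proof (induction t)
    case (Suc t)
    note [measurable] = Suc.IH
    show ?case
      unfolding fund_W.simps Let_def by measurable
  qed simp
  then show ?thesis
    unfolding fund_C_def by measurable
qed

lemma pred_income_within_band:
  assumes k: "1 \<le> k" "k \<le> N" and T_rv: "\<And>i. i < N \<Longrightarrow> T i \<in> borel_measurable M"
  shows "Measurable.pred M (\<lambda>\<omega>. income_within_band N k \<epsilon>1 \<epsilon>2 R S W0 (\<lambda>i. T i \<omega>))"
proof -
  have [measurable]: "(\<lambda>\<omega>. order_stat N (\<lambda>i. T i \<omega>) k) \<in> borel_measurable M"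
    using k T_rv by (rule borel_measurable_order_stat)
  have [measurable]: "(\<lambda>\<omega>. fund_C R S (\<lambda>t. card {i. i < N \<and> real t < T i \<omega>}) W0 s) \<in> borel_measurable M"
    for s
    using T_rv by (intro measurable_fund_C) measurable
  show ?thesis
    unfolding income_within_band_def Let_def le_floor_iff of_int_of_nat_eq by measurable
qed

subsection \<open>The probability integral transform\<close>

lemma real_distribution_uniform_01: "real_distribution (uniform_measure lborel {0..1::real})"
  unfolding real_distribution_def real_distribution_axioms_def
  by (auto intro!: prob_space_uniform_measure)

lemma cdf_uniform_01: "cdf (uniform_measure lborel {0..1}) u = max 0 (min 1 u)"
proof -
  have "cdf (uniform_measure lborel {0..1}) u = measure lborel ({0..1} \<inter> {..u})"
    unfolding cdf_def by (subst measure_uniform_measure) auto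
  also have "\<dots> = max 0 (min 1 u)"
  proof (cases "u < 0")
    case True
    then have "{0..1} \<inter> {..u} = ({} :: real set)" by auto
    then show ?thesis using True by simp
  next
    case False
    then have "{0..1} \<inter> {..u} = {0..min 1 u}" by auto
    then show ?thesis using False by simp
  qed
  finally show ?thesis .
qed

context real_distribution
begin

lemma borel_measurable_cdf: "cdf M \<in> borel_measurable borel"
  by (intro borel_measurable_mono) (auto simp: mono_def cdf_nondecreasing)

lemma continuous_cdf_sublevel:
  assumes cont: "\<And>y. isCont (cdf M) y" and ne: "{x. cdf M x \<le> u} \<noteq> {}" and u: "u < 1"
  obtains q where "{x. cdf M x \<le> u} = {..q}" "cdf M q = u"
proof -
  define A where "A = {x. cdf M x \<le> u}"
  obtain b where b: "\<And>x. b \<le> x \<Longrightarrow> u < cdf M x"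
    using order_tendstoD(1)[OF cdf_lim_at_top_prob u] by (auto simp: eventually_at_top_linorder)
  have "x \<le> b" if "x \<in> A" for x
    using b[of x] that unfolding A_def by (cases "b \<le> x") auto
  then have bdd: "bdd_above A"
    by (rule bdd_aboveI)
  have cont_on: "continuous_on S (cdf M)" for S
    using cont by (intro continuous_at_imp_continuous_on) auto
  have "closed A"
    unfolding A_def using cont_on by (intro closed_Collect_le continuous_on_const)
  moreover have "A \<noteq> {}"
    using ne unfolding A_def .
  ultimately have Sup: "Sup A \<in> A"
    using closed_contains_Sup bdd by blast
  have A_eq: "A = {..Sup A}"
  proof (intro equalityI subsetI)
    show "x \<in> {..Sup A}" if "x \<in> A" for x
      using cSup_upper[OF that bdd] by simp
    show "x \<in> A" if "x \<in> {..Sup A}" for x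
      using that Sup cdf_nondecreasing[of x "Sup A"] unfolding A_def by simp
  qed
  have "cdf M (Sup A) \<le> u" "u \<le> cdf M (max b (Sup A))" "Sup A \<le> max b (Sup A)"
    using Sup b[of "max b (Sup A)"] unfolding A_def by auto
  then obtain c where c: "Sup A \<le> c" "cdf M c = u"
    using IVT'[OF _ _ _ cont_on] by blast
  then have "c \<in> A"
    unfolding A_def by simp
  then have "c = Sup A"
    using cSup_upper[OF _ bdd] c(1) by (simp add: order.antisym)
  with c A_eq show ?thesis
    using that unfolding A_def by simp
qed

lemma measure_cdf_le:
  assumes cont: "\<And>y. isCont (cdf M) y"
  shows "measure M {x. cdf M x \<le> u} = max 0 (min 1 u)"
proof -
  consider "u < 0" | "1 \<le> u" | "0 \<le> u" "{x. cdf M x \<le> u} = {}"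
    | "u < 1" "{x. cdf M x \<le> u} \<noteq> {}"
    by (metis not_le)
  then show ?thesis
  proof cases
    case 1
    then have "u < cdf M x" for x
      using cdf_nonneg[of x] by linarith
    then have "{x. cdf M x \<le> u} = {}"
      by (simp add: not_le)
    with 1 show ?thesis
      by simp
  next
    case 2
    then have "cdf M x \<le> u" for x
      using cdf_bounded_prob[of x] by linarith
    then have "{x. cdf M x \<le> u} = UNIV"
      by simp
    with 2 show ?thesis
      using prob_space by simp
  next
    case 3
    have "\<not> 0 < u"
    proof
      assume "0 < u"
      then have "\<forall>\<^sub>F x in at_bot. cdf M x < u"
        by (rule order_tendstoD(2)[OF cdf_lim_at_bot])
      then obtain x where "cdf M x < u"
        by (metis eventually_at_bot_linorder order_refl)
      with 3 show False
        using less_imp_le by blast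
    qed
    with 3 show ?thesis
      by simp
  next
    case 4
    obtain q where "{x. cdf M x \<le> u} = {..q}" "cdf M q = u"
      using continuous_cdf_sublevel[OF cont 4(2,1)] .
    moreover have "0 \<le> u"
      using \<open>cdf M q = u\<close> cdf_nonneg[of q] by simp
    ultimately show ?thesis
      using 4 by (simp add: cdf_def)
  qed
qed

lemma distr_cdf_uniform:
  assumes cont: "\<And>y. isCont (cdf M) y"
  shows "distr M borel (cdf M) = uniform_measure lborel {0..1}"
proof (rule cdf_unique)
  show "real_distribution (distr M borel (cdf M))"
    by (intro real_distribution_distr measurable_finite_borel borel_measurable_cdf)
  show "real_distribution (uniform_measure lborel {0..1})"
    by (rule real_distribution_uniform_01)
  show "cdf (distr M borel (cdf M)) = cdf (uniform_measure lborel {0..1})"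
  proof
    fix u
    have "cdf (distr M borel (cdf M)) u = measure (distr M borel (cdf M)) {..u}"
      by (simp add: cdf_def)
    also have "\<dots> = measure M {x. cdf M x \<le> u}"
      using measurable_finite_borel[OF borel_measurable_cdf]
      by (subst measure_distr) (auto simp: vimage_def)
    finally show "cdf (distr M borel (cdf M)) u = cdf (uniform_measure lborel {0..1}) u"
      by (simp add: measure_cdf_le[OF cont] cdf_uniform_01)
  qed
qed

end

subsection \<open>I.i.d. samples\<close>

context prob_space
begin

lemma distr_restrict_iid:
  assumes "I \<noteq> {}" and indep: "indep_vars (\<lambda>_. borel) X I"
    and rv: "\<And>i. i \<in> I \<Longrightarrow> X i \<in> borel_measurable M"
    and distr: "\<And>i. i \<in> I \<Longrightarrow> distr M borel (X i) = Q"
  shows "distr M (\<Pi>\<^sub>M i\<in>I. borel) (\<lambda>\<omega>. \<lambda>i\<in>I. X i \<omega>) = (\<Pi>\<^sub>M i\<in>I. Q)"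
proof -
  have "distr M (\<Pi>\<^sub>M i\<in>I. borel) (\<lambda>\<omega>. \<lambda>i\<in>I. X i \<omega>) = (\<Pi>\<^sub>M i\<in>I. distr M borel (X i))"
    by (rule indep_vars_iff_distr_eq_PiM'[OF \<open>I \<noteq> {}\<close>, THEN iffD1, OF rv indep])
  also have "\<dots> = (\<Pi>\<^sub>M i\<in>I. Q)"
    by (rule PiM_cong) (simp_all add: distr)
  finally show ?thesis .
qed

lemma distr_cdf_transform_iid:
  assumes "I \<noteq> {}" and indep: "indep_vars (\<lambda>_. borel) X I"
    and rv: "\<And>i. i \<in> I \<Longrightarrow> X i \<in> borel_measurable M"
    and distr: "\<And>i. i \<in> I \<Longrightarrow> distr M borel (X i) = D"
    and D: "real_distribution D" and cont: "\<And>y. isCont (cdf D) y"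
  shows "distr M (\<Pi>\<^sub>M i\<in>I. borel) (\<lambda>\<omega>. \<lambda>i\<in>I. cdf D (X i \<omega>)) =
    (\<Pi>\<^sub>M i\<in>I. uniform_measure lborel {0..1})"
proof (rule distr_restrict_iid)
  have F: "cdf D \<in> borel_measurable borel"
    by (rule real_distribution.borel_measurable_cdf[OF D])
  then show "indep_vars (\<lambda>_. borel) (\<lambda>i \<omega>. cdf D (X i \<omega>)) I"
    by (rule indep_vars_compose2[OF indep])
  fix i assume "i \<in> I"
  then show "(\<lambda>\<omega>. cdf D (X i \<omega>)) \<in> borel_measurable M"
    by (rule measurable_compose[OF rv F])
  have "distr M borel (\<lambda>\<omega>. cdf D (X i \<omega>)) = distr (distr M borel (X i)) borel (cdf D)"
    using distr_distr[OF F rv[OF \<open>i \<in> I\<close>]] by (simp add: comp_def)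
  also have "\<dots> = uniform_measure lborel {0..1}"
    using distr[OF \<open>i \<in> I\<close>] real_distribution.distr_cdf_uniform[OF D cont] by simp
  finally show "distr M borel (\<lambda>\<omega>. cdf D (X i \<omega>)) = uniform_measure lborel {0..1}" .
qed (fact \<open>I \<noteq> {}\<close>)

lemma AE_neq_of_isCont_cdf:
  assumes rv: "X \<in> borel_measurable M" and cont: "isCont (cdf (distr M borel X)) y"
  shows "AE \<omega> in M. X \<omega> \<noteq> y"
proof -
  interpret X: real_distribution "distr M borel X"
    using rv by simp
  have "prob (X -` {y} \<inter> space M) = measure (distr M borel X) {y}"
    using rv by (simp add: measure_distr)
  also have "\<dots> = 0"
    using X.isCont_cdf cont by simp
  finally have "AE \<omega> in M. \<omega> \<notin> X -` {y} \<inter> space M"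
    using prob_eq_0[of "X -` {y} \<inter> space M"] rv by simp
  then show ?thesis
    using AE_space by eventually_elim auto
qed

lemma AE_all_neq_of_nat:
  fixes X :: "nat \<Rightarrow> 'a \<Rightarrow> real"
  assumes rv: "\<And>j. j < N \<Longrightarrow> X j \<in> borel_measurable M"
    and X_id: "\<And>j. j < N \<Longrightarrow> distr M borel (X j) = distr M borel (X 0)"
    and cont: "\<And>y. isCont (cdf (distr M borel (X 0))) y"
  shows "AE \<omega> in M. \<forall>s::nat. \<forall>j<N. X j \<omega> \<noteq> real s"
proof -
  have "AE \<omega> in M. j < N \<longrightarrow> X j \<omega> \<noteq> real s" for j s
    using AE_neq_of_isCont_cdf[OF rv, of j "real s"] X_id[of j] cont by (cases "j < N") simp_all
  then show ?thesis
    unfolding AE_all_countable by blast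
qed

lemma measure_greater_eq_1_minus_cdf:
  assumes "X \<in> borel_measurable M"
  shows "measure M {\<omega> \<in> space M. u < X \<omega>} = 1 - cdf (distr M borel X) u"
proof -
  have "{\<omega> \<in> space M. u < X \<omega>} = space M - (X -` {..u} \<inter> space M)"
    by auto
  then show ?thesis
    using assms by (simp add: cdf_def measure_distr prob_compl)
qed

lemma life_annuity_survival_function:
  assumes rv: "X \<in> borel_measurable M" and R: "R > -1"
    and summable: "\<And>t::nat. summable (\<lambda>j. inverse ((1 + R) ^ Suc j) *
      surv_prob (\<lambda>u. measure M {\<omega> \<in> space M. u < X \<omega>}) (real t) (real (Suc j)))"
  shows "life_annuity R (\<lambda>u. measure M {\<omega> \<in> space M. u < X \<omega>})"
proof
  show "measure M {\<omega> \<in> space M. y < X \<omega>} \<le> measure M {\<omega> \<in> space M. x < X \<omega>}" if "x \<le> y" for x y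
  proof (rule finite_measure_mono)
    show "{\<omega> \<in> space M. x < X \<omega>} \<in> sets M"
      using rv by measurable
  qed (use that in auto)
qed (use R summable in simp_all)

end

lemma distr_cdf_sample_eq_uniform_sample:
  fixes T :: "nat \<Rightarrow> 'a \<Rightarrow> real" and U :: "nat \<Rightarrow> 'b \<Rightarrow> real"
  assumes "prob_space M" "prob_space M'" "0 < N"
    and T_rv: "\<And>i. i < N \<Longrightarrow> T i \<in> borel_measurable M"
    and T_indep: "prob_space.indep_vars M (\<lambda>_. borel) T {0..<N}"
    and T_id: "\<And>i. i < N \<Longrightarrow> distr M borel (T i) = distr M borel (T 0)"
    and T_cont: "\<And>y. isCont (cdf (distr M borel (T 0))) y"
    and U_rv: "\<And>i. i < N \<Longrightarrow> U i \<in> borel_measurable M'"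
    and U_indep: "prob_space.indep_vars M' (\<lambda>_. borel) U {0..<N}"
    and U_unif: "\<And>i. i < N \<Longrightarrow> distr M' lborel (U i) = uniform_measure lborel {0..1}"
  shows "distr M (\<Pi>\<^sub>M i\<in>{0..<N}. borel) (\<lambda>\<omega>. \<lambda>i\<in>{0..<N}. cdf (distr M borel (T 0)) (T i \<omega>)) =
    distr M' (\<Pi>\<^sub>M i\<in>{0..<N}. borel) (\<lambda>\<omega>. \<lambda>i\<in>{0..<N}. U i \<omega>)"
proof -
  interpret M: prob_space M by fact
  interpret M': prob_space M' by fact
  have N: "{0..<N} \<noteq> {}"
    using \<open>0 < N\<close> by simp
  have T0: "T 0 \<in> borel_measurable M"
    using T_rv \<open>0 < N\<close> by simp
  have "distr M (\<Pi>\<^sub>M i\<in>{0..<N}. borel) (\<lambda>\<omega>. \<lambda>i\<in>{0..<N}. cdf (distr M borel (T 0)) (T i \<omega>)) =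
      (\<Pi>\<^sub>M i\<in>{0..<N}. uniform_measure lborel {0..1})"
  proof (rule M.distr_cdf_transform_iid[OF N T_indep _ _ M.real_distribution_distr[OF T0] T_cont])
    show "T i \<in> borel_measurable M" "distr M borel (T i) = distr M borel (T 0)" if "i \<in> {0..<N}" for i
      using T_rv[of i] T_id[of i] that by simp_all
  qed
  also have "\<dots> = distr M' (\<Pi>\<^sub>M i\<in>{0..<N}. borel) (\<lambda>\<omega>. \<lambda>i\<in>{0..<N}. U i \<omega>)"
  proof (rule M'.distr_restrict_iid[symmetric, OF N U_indep])
    show "U i \<in> borel_measurable M'" "distr M' borel (U i) = uniform_measure lborel {0..1}"
      if "i \<in> {0..<N}" for i
      using U_rv[of i] U_unif[of i] that distr_cong[of M' M' borel lborel "U i" "U i"] by simp_all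
  qed
  finally show ?thesis .
qed

lemma measure_le_of_distr_eq_AE:
  assumes "prob_space M" and X: "X \<in> measurable M P" and Y: "Y \<in> measurable M' P"
    and distr_eq: "distr M P X = distr M' P Y" and G: "G \<in> sets P"
    and A: "A \<in> sets M" and AE: "AE \<omega> in M. X \<omega> \<in> G \<longrightarrow> \<omega> \<in> A"
  shows "measure M' (Y -` G \<inter> space M') \<le> measure M A"
proof -
  interpret prob_space M by fact
  have "measure M' (Y -` G \<inter> space M') = measure (distr M' P Y) G"
    using Y G by (simp add: measure_distr)
  also have "\<dots> = measure M (X -` G \<inter> space M)"
    unfolding distr_eq[symmetric] using X G by (simp add: measure_distr)
  also have "\<dots> \<le> measure M A"
    using AE A by (intro finite_measure_mono_AE) auto
  finally show ?thesis .
qed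

lemma measure_order_stat_band_le:
  assumes "prob_space M" "k \<le> N"
    and X: "\<And>i. i < N \<Longrightarrow> X i \<in> borel_measurable M" and Y: "\<And>i. i < N \<Longrightarrow> Y i \<in> borel_measurable M'"
    and distr_eq: "distr M (\<Pi>\<^sub>M i\<in>{0..<N}. borel) (\<lambda>\<omega>. \<lambda>i\<in>{0..<N}. X i \<omega>) =
      distr M' (\<Pi>\<^sub>M i\<in>{0..<N}. borel) (\<lambda>\<omega>. \<lambda>i\<in>{0..<N}. Y i \<omega>)"
    and P: "Measurable.pred M P"
    and AE: "AE \<omega> in M. order_stat_band N k \<epsilon>1 \<epsilon>2 (\<lambda>j. X j \<omega>) \<longrightarrow> P \<omega>"
  shows "measure M' {\<omega> \<in> space M'. order_stat_band N k \<epsilon>1 \<epsilon>2 (\<lambda>j. Y j \<omega>)} \<le> measure M {\<omega> \<in> space M. P \<omega>}"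
proof -
  define G where "G = {x \<in> space (\<Pi>\<^sub>M i\<in>{0..<N}. borel). order_stat_band N k \<epsilon>1 \<epsilon>2 x}"
  have X': "(\<lambda>\<omega>. \<lambda>i\<in>{0..<N}. X i \<omega>) \<in> M \<rightarrow>\<^sub>M (\<Pi>\<^sub>M i\<in>{0..<N}. borel)"
    using X by (intro measurable_restrict) auto
  have Y': "(\<lambda>\<omega>. \<lambda>i\<in>{0..<N}. Y i \<omega>) \<in> M' \<rightarrow>\<^sub>M (\<Pi>\<^sub>M i\<in>{0..<N}. borel)"
    using Y by (intro measurable_restrict) auto
  have "{\<omega> \<in> space M'. order_stat_band N k \<epsilon>1 \<epsilon>2 (\<lambda>j. Y j \<omega>)} = (\<lambda>\<omega>. \<lambda>i\<in>{0..<N}. Y i \<omega>) -` G \<inter> space M'"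
    unfolding G_def using measurable_space[OF Y'] by auto
  also have "measure M' \<dots> \<le> measure M {\<omega> \<in> space M. P \<omega>}"
  proof (rule measure_le_of_distr_eq_AE[OF \<open>prob_space M\<close> X' Y' distr_eq])
    show "G \<in> sets (\<Pi>\<^sub>M i\<in>{0..<N}. borel)"
      unfolding G_def using \<open>k \<le> N\<close> by (rule sets_order_stat_band)
    show "{\<omega> \<in> space M. P \<omega>} \<in> sets M"
      using P by (simp add: Measurable.pred_def)
    show "AE \<omega> in M. (\<lambda>i\<in>{0..<N}. X i \<omega>) \<in> G \<longrightarrow> \<omega> \<in> {\<omega> \<in> space M. P \<omega>}"
      using AE AE_space by eventually_elim (simp add: G_def)
  qed
  finally show ?thesis .
qed

theorem theorem1:
  fixes M :: "'a measure" and T :: "nat \<Rightarrow> 'a \<Rightarrow> real"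
    and M' :: "'b measure" and U :: "nat \<Rightarrow> 'b \<Rightarrow> real"
    and N k :: nat and R W0 \<epsilon>1 \<epsilon>2 :: real
  assumes "prob_space M"
    and N: "N \<ge> 2"
    and T_rv: "\<And>i. i < N \<Longrightarrow> T i \<in> borel_measurable M"
    and T_indep: "prob_space.indep_vars M (\<lambda>_. borel) T {0..<N}"
    and T_id: "\<And>i. i < N \<Longrightarrow> distr M borel (T i) = distr M borel (T 0)"
    and T_cont: "\<And>y. isCont (cdf (distr M borel (T 0))) y"
    and T_pos: "\<And>i \<omega>. i < N \<Longrightarrow> \<omega> \<in> space M \<Longrightarrow> T i \<omega> > 0"
    and "prob_space M'"
    and U_rv: "\<And>i. i < N \<Longrightarrow> U i \<in> borel_measurable M'"
    and U_indep: "prob_space.indep_vars M' (\<lambda>_. borel) U {0..<N}"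
    and U_unif: "\<And>i. i < N \<Longrightarrow> distr M' lborel (U i) = uniform_measure lborel {0..1}"
    and R: "R > -1"
    and W0: "W0 > 0"
    and summ: "\<And>t::nat. summable (\<lambda>j. inverse ((1 + R) ^ Suc j) *
                 surv_prob (\<lambda>u. measure M {\<omega> \<in> space M. T 0 \<omega> > u}) (real t) (real (Suc j)))"
    and e1: "0 < \<epsilon>1" "\<epsilon>1 < 1"
    and e2: "\<epsilon>2 > 0"
    and k: "1 \<le> k" "k \<le> N"
  shows
    "measure M {\<omega> \<in> space M. \<forall>s::nat. 1 \<le> s \<and> int s \<le> \<lfloor>order_stat N (\<lambda>i. T i \<omega>) k\<rfloor> \<longrightarrow>
        (let S = (\<lambda>u. measure M {\<omega>' \<in> space M. T 0 \<omega>' > u});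
             L = (\<lambda>t::nat. card {i. i < N \<and> T i \<omega> > real t});
             C = fund_C R S L W0
         in (1 + \<epsilon>2) * C 0 \<ge> C s \<and> C s \<ge> (1 - \<epsilon>1) * C 0)}
     \<ge> measure M' {\<omega> \<in> space M'. \<forall>i\<in>{1..k}.
        (1 - \<epsilon>1) * (real i - 1) / real N + \<epsilon>1 \<ge> order_stat N (\<lambda>j. U j \<omega>) i \<and>
        order_stat N (\<lambda>j. U j \<omega>) i \<ge> (1 + \<epsilon>2) * real (min i (N - 1)) / real N - \<epsilon>2}"
proof -
  interpret M: prob_space M by fact
  define S where "S = (\<lambda>u. measure M {\<omega>' \<in> space M. T 0 \<omega>' > u})"
  have T0: "T 0 \<in> borel_measurable M"
    using T_rv N by simp
  interpret T0: real_distribution "distr M borel (T 0)"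
    using T0 by simp
  interpret life_annuity R S
    unfolding S_def using T0 R summ by (rule M.life_annuity_survival_function)
  have S_F: "S u = 1 - cdf (distr M borel (T 0)) u" for u
    unfolding S_def by (rule M.measure_greater_eq_1_minus_cdf[OF T0])
  have "{\<omega> \<in> space M. 0 < T 0 \<omega>} = space M"
    using T_pos N by auto
  then have S0: "S 0 = 1"
    unfolding S_def by (simp add: M.prob_space)
  have no_tie: "AE \<omega> in M. \<forall>s::nat. \<forall>j<N. T j \<omega> \<noteq> real s"
    using T_rv T_id T_cont by (rule M.AE_all_neq_of_nat)
  have distr_eq: "distr M (\<Pi>\<^sub>M i\<in>{0..<N}. borel) (\<lambda>\<omega>. \<lambda>i\<in>{0..<N}. cdf (distr M borel (T 0)) (T i \<omega>)) =
      distr M' (\<Pi>\<^sub>M i\<in>{0..<N}. borel) (\<lambda>\<omega>. \<lambda>i\<in>{0..<N}. U i \<omega>)"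
    using N by (intro distr_cdf_sample_eq_uniform_sample[OF \<open>prob_space M\<close> \<open>prob_space M'\<close> _ T_rv
        T_indep T_id T_cont U_rv U_indep U_unif]) simp
  have "measure M' {\<omega> \<in> space M'. order_stat_band N k \<epsilon>1 \<epsilon>2 (\<lambda>j. U j \<omega>)}
      \<le> measure M {\<omega> \<in> space M. income_within_band N k \<epsilon>1 \<epsilon>2 R S W0 (\<lambda>i. T i \<omega>)}"
  proof (rule measure_order_stat_band_le[OF \<open>prob_space M\<close> k(2) _ U_rv distr_eq])
    show "(\<lambda>\<omega>. cdf (distr M borel (T 0)) (T i \<omega>)) \<in> borel_measurable M" if "i < N" for i
      using T_rv[OF that] T0.borel_measurable_cdf by measurable
    show "Measurable.pred M (\<lambda>\<omega>. income_within_band N k \<epsilon>1 \<epsilon>2 R S W0 (\<lambda>i. T i \<omega>))"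
      using k T_rv by (rule pred_income_within_band)
    show "AE \<omega> in M. order_stat_band N k \<epsilon>1 \<epsilon>2 (\<lambda>j. cdf (distr M borel (T 0)) (T j \<omega>)) \<longrightarrow>
        income_within_band N k \<epsilon>1 \<epsilon>2 R S W0 (\<lambda>i. T i \<omega>)"
      using no_tie AE_space
    proof eventually_elim
      case (elim \<omega>)
      show ?case
        using income_within_band_if_order_stat_band[where T = "\<lambda>j. T j \<omega>", OF S_F S0 T0.cdf_nonneg
            T_pos[OF _ elim(2)] elim(1) k less_imp_le[OF e2] W0] by blast
    qed
  qed
  then show ?thesis
    by (simp only: income_within_band_def order_stat_band_def Let_def S_def)
qed

end
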